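(* Let $G,H$ be finite simple graphs. Then the Euler characteristic of the strong product is multiplicative: $\chi(G*H)=\chi(G)\,\chi(H)$.
   Context: The Euler characteristic of a finite simple graph is $\chi(G)=\sum_{k\ge0}(-1)^k f_k(G)$, where $f_k(G)$ is the number of complete subgraphs of $G$ with $k+1$ vertices. The strong product $G*H$ has vertex set $V(G)\times V(H)$, and two distinct vertices $(a,b),(c,d)$ are adjacent iff ($a=c$ or $a$ is adjacent to $c$ in $G$) and ($b=d$ or $b$ is adjacent to $d$ in $H$). *)

theory Defs
  imports Main
begin

definition simple_graph :: "'a set \<Rightarrow> ('a \<Rightarrow> 'a \<Rightarrow> bool) \<Rightarrow> bool" where
  "simple_graph V E \<longleftrightarrow> finite V \<and> (\<forall>x y. E x y \<longrightarrow> x \<in> V \<and> y \<in> V)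
     \<and> (\<forall>x. \<not> E x x) \<and> (\<forall>x y. E x y \<longrightarrow> E y x)"

definition cliques :: "'a set \<Rightarrow> ('a \<Rightarrow> 'a \<Rightarrow> bool) \<Rightarrow> nat \<Rightarrow> 'a set set" where
  "cliques V E k = {C. C \<subseteq> V \<and> card C = k + 1 \<and> (\<forall>x\<in>C. \<forall>y\<in>C. x \<noteq> y \<longrightarrow> E x y)}"

definition f_vec :: "'a set \<Rightarrow> ('a \<Rightarrow> 'a \<Rightarrow> bool) \<Rightarrow> nat \<Rightarrow> nat" where
  "f_vec V E k = card (cliques V E k)"

text \<open>Euler characteristic; complete subgraphs have at most card V vertices,
so the sum over k \<le> card V is the full (finite) sum.\<close>

definition euler_char :: "'a set \<Rightarrow> ('a \<Rightarrow> 'a \<Rightarrow> bool) \<Rightarrow> int" where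
  "euler_char V E = (\<Sum>k\<le>card V. (-1) ^ k * int (f_vec V E k))"

definition strong_prod_edges ::
  "('a \<Rightarrow> 'a \<Rightarrow> bool) \<Rightarrow> ('b \<Rightarrow> 'b \<Rightarrow> bool) \<Rightarrow> ('a \<times> 'b) \<Rightarrow> ('a \<times> 'b) \<Rightarrow> bool" where
  "strong_prod_edges E F p q \<longleftrightarrow> p \<noteq> q
     \<and> (fst p = fst q \<or> E (fst p) (fst q)) \<and> (snd p = snd q \<or> F (snd p) (snd q))"

end

(*
  Up to sign, the Euler characteristic is the alternating sum (-1)^|C| over the nonempty
  cliques C. A vertex set of the strong product is a clique exactly when both of its
  projections are, so the nonempty cliques of G*H are the relations K \<subseteq> A \<times> B onto
  both factors of a pair of nonempty cliques A, B. For such relations the alternating sum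
  is -(-1)^(|A|+|B|): over relations merely total on A it factors, one nonempty fibre per
  a \<in> A, into (-1)^|A|, and Moebius inversion over the image in B cuts it down to the
  relations onto B. Summing over all pairs A, B gives chi(G) chi(H).
*)
theory Submission
  imports Defs "HOL-Library.FuncSet"
begin

lemma sum_nonempty_subsets_neg_one_power_card:
  assumes "finite A" "A \<noteq> {}"
  shows "(\<Sum>S\<in>Pow A - {{}}. (-1::'b::ring_1) ^ card S) = -1"
proof -
  have "(\<Sum>S\<in>Pow A. (-1::'b) ^ card S) = 0"
  proof (rule sum_alternating_cancels)
    have "{} \<subset> A" using assms(2) by auto
    from card_subsupersets_even_odd[OF assms(1) this]
    show "card {S \<in> Pow A. even (card S)} = card {S \<in> Pow A. odd (card S)}" by simp
  qed (use assms(1) in simp)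
  moreover have "(\<Sum>S\<in>Pow A. (-1::'b) ^ card S) = 1 + (\<Sum>S\<in>Pow A - {{}}. (-1) ^ card S)"
    using assms(1) by (subst sum.remove[of _ "{}"]) auto
  ultimately show ?thesis by (metis add_eq_0_iff)
qed

definition left_total_rels :: "'a set \<Rightarrow> 'b set \<Rightarrow> ('a \<times> 'b) set set" where
  "left_total_rels A B = {K. K \<subseteq> A \<times> B \<and> fst ` K = A}"

definition bi_total_rels :: "'a set \<Rightarrow> 'b set \<Rightarrow> ('a \<times> 'b) set set" where
  "bi_total_rels A B = {K. K \<subseteq> A \<times> B \<and> fst ` K = A \<and> snd ` K = B}"

lemma inj_on_Sigma_PiE: "inj_on (Sigma A) (PiE A X)"
proof (rule inj_onI)
  fix g h assume g: "g \<in> PiE A X" and h: "h \<in> PiE A X" and eq: "Sigma A g = Sigma A h"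
  show "g = h"
  proof (rule PiE_ext[OF g h])
    fix a assume "a \<in> A"
    then show "g a = h a" using eq by (auto simp: set_eq_iff)
  qed
qed

lemma left_total_rels_eq_Sigma_image:
  "left_total_rels A B = Sigma A ` PiE A (\<lambda>_. Pow B - {{}})"
proof (intro equalityI subsetI)
  fix K assume K: "K \<in> left_total_rels A B"
  let ?g = "\<lambda>a\<in>A. {b. (a, b) \<in> K}"
  have "?g \<in> PiE A (\<lambda>_. Pow B - {{}})"
    using K by (force simp: left_total_rels_def)
  moreover have "K = Sigma A ?g"
  proof (intro equalityI subsetI)
    fix p assume "p \<in> K"
    then show "p \<in> Sigma A ?g" using K by (cases p) (auto simp: left_total_rels_def)
  qed (auto split: if_splits)
  ultimately show "K \<in> Sigma A ` PiE A (\<lambda>_. Pow B - {{}})" by blast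
next
  fix K assume "K \<in> Sigma A ` PiE A (\<lambda>_. Pow B - {{}})"
  then obtain g where g: "g \<in> PiE A (\<lambda>_. Pow B - {{}})" and K: "K = Sigma A g" by blast
  have "fst ` Sigma A g = A" using g by (force simp: PiE_iff)
  then show "K \<in> left_total_rels A B" using g K by (auto simp: left_total_rels_def PiE_iff)
qed

lemma sum_left_total_rels:
  assumes "finite A" "finite B" "B \<noteq> {}"
  shows "(\<Sum>K\<in>left_total_rels A B. (-1::'c::comm_ring_1) ^ card K) = (-1) ^ card A"
proof -
  let ?P = "PiE A (\<lambda>_. Pow B - {{}})"
  have fin: "finite (g a)" if "g \<in> ?P" "a \<in> A" for g a
    using that assms(2) by (auto intro: finite_subset)
  have "(\<Sum>K\<in>left_total_rels A B. (-1::'c) ^ card K) = (\<Sum>g\<in>?P. (-1) ^ card (Sigma A g))"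
    unfolding left_total_rels_eq_Sigma_image
    by (rule sum.reindex[OF inj_on_Sigma_PiE, unfolded comp_def])
  also have "\<dots> = (\<Sum>g\<in>?P. \<Prod>a\<in>A. (-1) ^ card (g a))"
    using assms(1) fin by (intro sum.cong) (simp_all add: power_sum)
  also have "\<dots> = (\<Prod>a\<in>A. \<Sum>S\<in>Pow B - {{}}. (-1) ^ card S)"
    using assms by (simp add: prod_sum_PiE del: prod_constant)
  also have "\<dots> = (-1) ^ card A"
    by (simp add: sum_nonempty_subsets_neg_one_power_card assms(2,3))
  finally show ?thesis .
qed

lemma sum_left_total_rels_by_range:
  assumes "finite A" "finite B"
  shows "(\<Sum>K\<in>left_total_rels A B. h K) = (\<Sum>B'\<in>Pow B. \<Sum>K\<in>bi_total_rels A B'. h K)"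
proof -
  have "finite (left_total_rels A B)"
    using assms by (auto simp: left_total_rels_def intro: finite_subset[of _ "Pow (A \<times> B)"])
  then have "(\<Sum>K\<in>left_total_rels A B. h K)
      = (\<Sum>B'\<in>Pow B. \<Sum>K\<in>{K \<in> left_total_rels A B. snd ` K = B'}. h K)"
    using assms(2) by (intro sum.group[symmetric]) (auto simp: left_total_rels_def)
  also have "\<dots> = (\<Sum>B'\<in>Pow B. \<Sum>K\<in>bi_total_rels A B'. h K)"
    by (intro sum.cong refl arg_cong2[where f = sum])
      (force simp: left_total_rels_def bi_total_rels_def)
  finally show ?thesis .
qed

lemma sum_bi_total_rels:
  assumes "finite A" "A \<noteq> {}" "finite B" "B \<noteq> {}"
  shows "(\<Sum>K\<in>bi_total_rels A B. (-1::'c::comm_ring_1) ^ card K) = - ((-1) ^ (card A + card B))"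
proof -
  let ?f = "\<lambda>B. \<Sum>K\<in>bi_total_rels A B. (-1::'c) ^ card K"
  have left_total: "(\<Sum>K\<in>left_total_rels A B'. (-1::'c) ^ card K)
      = (if B' = {} then 0 else (-1) ^ card A)"
    if "finite B'" for B'
  proof (cases "B' = {}")
    case True
    then have "left_total_rels A B' = {}" using assms(2) by (auto simp: left_total_rels_def)
    then show ?thesis using True by simp
  qed (simp add: sum_left_total_rels assms(1) that)
  have "(if B' = {} then 0 else (-1) ^ card A) = sum ?f (Pow B')" if "finite B'" for B'
    unfolding left_total[OF that, symmetric] by (rule sum_left_total_rels_by_range[OF assms(1) that])
  then have "?f B = (\<Sum>B'\<in>Pow B. (-1) ^ (card B - card B') * (if B' = {} then 0 else (-1) ^ card A))"
    by (rule inclusion_exclusion_mobius[OF _ assms(3)])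
  also have "\<dots> = (\<Sum>B'\<in>Pow B - {{}}. (-1) ^ (card A + card B) * (-1) ^ card B')"
    using assms(3) by (subst sum.remove[of _ "{}"])
      (auto intro!: sum.cong simp: card_mono power_add simp flip: neg_one_power_add_eq_neg_one_power_diff)
  also have "\<dots> = - ((-1) ^ (card A + card B))"
    by (simp only: sum_distrib_left[symmetric] sum_nonempty_subsets_neg_one_power_card[OF assms(3,4)]) simp
  finally show ?thesis .
qed

definition clique :: "('a \<Rightarrow> 'a \<Rightarrow> bool) \<Rightarrow> 'a set \<Rightarrow> bool" where
  "clique E C \<longleftrightarrow> (\<forall>x\<in>C. \<forall>y\<in>C. x \<noteq> y \<longrightarrow> E x y)"

definition nonempty_cliques :: "'a set \<Rightarrow> ('a \<Rightarrow> 'a \<Rightarrow> bool) \<Rightarrow> 'a set set" where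
  "nonempty_cliques V E = {C. C \<subseteq> V \<and> C \<noteq> {} \<and> clique E C}"

lemma finite_nonempty_cliques: "finite V \<Longrightarrow> finite (nonempty_cliques V E)"
  by (rule finite_subset[of _ "Pow V"]) (auto simp: nonempty_cliques_def)

lemma cliques_eq_nonempty_cliques_card:
  "cliques V E k = {C \<in> nonempty_cliques V E. card C = Suc k}"
  by (auto simp: cliques_def nonempty_cliques_def clique_def)

lemma card_nonempty_clique_pos:
  "finite V \<Longrightarrow> C \<in> nonempty_cliques V E \<Longrightarrow> 0 < card C"
  by (auto simp: nonempty_cliques_def card_gt_0_iff intro: finite_subset)

lemma euler_char_eq_sum_nonempty_cliques:
  assumes "finite V"
  shows "euler_char V E = - (\<Sum>C\<in>nonempty_cliques V E. (-1) ^ card C)"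
proof -
  have card_le: "card C - 1 \<le> card V" if "C \<in> nonempty_cliques V E" for C
  proof -
    have "C \<subseteq> V" using that by (simp add: nonempty_cliques_def)
    then show ?thesis by (meson card_mono[OF assms] diff_le_self le_trans)
  qed
  have fiber: "{C \<in> nonempty_cliques V E. card C - 1 = k} = cliques V E k" for k
    unfolding cliques_eq_nonempty_cliques_card using card_nonempty_clique_pos[OF assms, of _ E]
    by (intro Collect_cong) auto
  have "(\<Sum>C\<in>nonempty_cliques V E. (-1::int) ^ card C)
      = (\<Sum>k\<le>card V. \<Sum>C\<in>{C \<in> nonempty_cliques V E. card C - 1 = k}. (-1) ^ card C)"
    using card_le assms
    by (intro sum.group[symmetric]) (simp_all add: finite_nonempty_cliques image_subset_iff)
  also have "\<dots> = (\<Sum>k\<le>card V. - ((-1) ^ k * int (f_vec V E k)))"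
    unfolding fiber f_vec_def by (intro sum.cong refl) (simp add: cliques_def)
  finally show ?thesis
    by (simp add: euler_char_def sum_negf)
qed

lemma clique_strong_prod_iff:
  "clique (strong_prod_edges E F) K \<longleftrightarrow> clique E (fst ` K) \<and> clique F (snd ` K)"
  unfolding clique_def strong_prod_edges_def by fastforce

lemma sum_nonempty_cliques_strong_prod:
  assumes "finite V" "finite W"
  shows "(\<Sum>K\<in>nonempty_cliques (V \<times> W) (strong_prod_edges E F). h K)
    = (\<Sum>(A, B)\<in>nonempty_cliques V E \<times> nonempty_cliques W F. \<Sum>K\<in>bi_total_rels A B. h K)"
proof -
  let ?C = "nonempty_cliques (V \<times> W) (strong_prod_edges E F)"
  have "(\<Sum>K\<in>?C. h K)
      = (\<Sum>AB\<in>nonempty_cliques V E \<times> nonempty_cliques W F.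
           \<Sum>K\<in>{K \<in> ?C. (fst ` K, snd ` K) = AB}. h K)"
    using assms by (intro sum.group[symmetric])
      (auto simp: finite_nonempty_cliques nonempty_cliques_def clique_strong_prod_iff)
  also have "\<dots> = (\<Sum>(A, B)\<in>nonempty_cliques V E \<times> nonempty_cliques W F. \<Sum>K\<in>bi_total_rels A B. h K)"
  proof (intro sum.cong refl, clarify)
    fix A B assume "A \<in> nonempty_cliques V E" "B \<in> nonempty_cliques W F"
    then have "{K \<in> ?C. (fst ` K, snd ` K) = (A, B)} = bi_total_rels A B"
      by (auto simp: nonempty_cliques_def bi_total_rels_def clique_strong_prod_iff
          intro: rev_image_eqI)
    then show "(\<Sum>K\<in>{K \<in> ?C. (fst ` K, snd ` K) = (A, B)}. h K) = (\<Sum>K\<in>bi_total_rels A B. h K)"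
      by simp
  qed
  finally show ?thesis .
qed

theorem mainTheorem5:
  fixes V :: "'a set" and E :: "'a \<Rightarrow> 'a \<Rightarrow> bool"
    and W :: "'b set" and F :: "'b \<Rightarrow> 'b \<Rightarrow> bool"
  assumes "simple_graph V E" and "simple_graph W F"
  shows "euler_char (V \<times> W) (strong_prod_edges E F) = euler_char V E * euler_char W F"
proof -
  have V: "finite V" and W: "finite W" using assms by (auto simp: simple_graph_def)
  have "euler_char (V \<times> W) (strong_prod_edges E F)
      = - (\<Sum>(A, B)\<in>nonempty_cliques V E \<times> nonempty_cliques W F.
             \<Sum>K\<in>bi_total_rels A B. (-1) ^ card K)"
    using V W by (simp add: euler_char_eq_sum_nonempty_cliques sum_nonempty_cliques_strong_prod)
  also have "\<dots> = - (\<Sum>(A, B)\<in>nonempty_cliques V E \<times> nonempty_cliques W F.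
             - ((-1) ^ card A * (-1) ^ card B))"
  proof (intro arg_cong[where f = uminus] sum.cong refl, clarify)
    fix A B assume "A \<in> nonempty_cliques V E" "B \<in> nonempty_cliques W F"
    then have "finite A" "A \<noteq> {}" "finite B" "B \<noteq> {}"
      using card_nonempty_clique_pos V W by (auto simp: card_gt_0_iff)
    then show "(\<Sum>K\<in>bi_total_rels A B. (-1) ^ card K) = - ((-1::int) ^ card A * (-1) ^ card B)"
      by (simp add: sum_bi_total_rels power_add)
  qed
  also have "\<dots> = euler_char V E * euler_char W F"
    using V W by (simp add: euler_char_eq_sum_nonempty_cliques sum_negf sum_product
        sum.cartesian_product split_def)
  finally show ?thesis .
qed

end
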